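(* Let $\omega$ be a valid weight, let $a\in\mathbb{C}\setminus\{0\}$, and for $b\in\mathbb{C}$ let $V_b=M_{b-z}^*M_{b-z}$ act on $H^2_\omega$. Then for each $\theta\in\mathbb{R}$, $V_a$ is unitarily equivalent to $V_{ae^{i\theta}}$. In particular, $\sigma(V_a)=\sigma(V_{ae^{i\theta}})$ and $\sigma_{\mathrm p}(V_a)=\sigma_{\mathrm p}(V_{ae^{i\theta}})$ for all $\theta\in\mathbb{R}$.
   Context: A weight $\omega=\{\omega_n\}_{n\ge0}$ is called valid if it is a monotonic sequence of positive numbers with $\omega_0=1$, $\lim_{n\to\infty}\omega_{n+1}/\omega_n=1$ and $\sum_{n=0}^\infty(1-\omega_{n+1}/\omega_n)^2<\infty$. The weighted Hardy space $H^2_\omega$ is the Hilbert space of holomorphic functions $f(z)=\sum_{n\ge0}a_nz^n$ on the unit disc with $\|f\|_\omega^2=\sum_{n\ge0}|a_n|^2\omega_n<\infty$. $M_\varphi$ denotes multiplication by the polynomial $\varphi$ on $H^2_\omega$ and $M_\varphi^*$ its adjoint. $\sigma$ and $\sigma_{\mathrm p}$ denote the spectrum and point spectrum. *)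

theory Defs
  imports "HOL-Analysis.Analysis"
begin

text \<open>A holomorphic function f(z) = sum a_n z^n on the unit disc is identified with its
  Taylor coefficient sequence a :: nat => complex.\<close>

definition valid_weight :: "(nat \<Rightarrow> real) \<Rightarrow> bool" where
  "valid_weight \<omega> \<longleftrightarrow>
     (\<forall>n. \<omega> n > 0) \<and> (mono \<omega> \<or> antimono \<omega>) \<and> \<omega> 0 = 1 \<and>
     (\<lambda>n. \<omega> (Suc n) / \<omega> n) \<longlonglongrightarrow> 1 \<and>
     summable (\<lambda>n. (1 - \<omega> (Suc n) / \<omega> n)\<^sup>2)"

definition H2w :: "(nat \<Rightarrow> real) \<Rightarrow> (nat \<Rightarrow> complex) set" where
  "H2w \<omega> = {a. summable (\<lambda>n. (cmod (a n))\<^sup>2 * \<omega> n)}"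

definition w_inner :: "(nat \<Rightarrow> real) \<Rightarrow> (nat \<Rightarrow> complex) \<Rightarrow> (nat \<Rightarrow> complex) \<Rightarrow> complex" where
  "w_inner \<omega> f g = (\<Sum>n. f n * cnj (g n) * complex_of_real (\<omega> n))"

definition w_norm :: "(nat \<Rightarrow> real) \<Rightarrow> (nat \<Rightarrow> complex) \<Rightarrow> real" where
  "w_norm \<omega> f = sqrt (\<Sum>n. (cmod (f n))\<^sup>2 * \<omega> n)"

text \<open>Multiplication by the polynomial b - z, acting on coefficient sequences.\<close>
definition mult_bz :: "complex \<Rightarrow> (nat \<Rightarrow> complex) \<Rightarrow> (nat \<Rightarrow> complex)" where
  "mult_bz b f = (\<lambda>n. b * f n - (if n = 0 then 0 else f (n - 1)))"

definition w_adjoint :: "(nat \<Rightarrow> real) \<Rightarrow> ((nat \<Rightarrow> complex) \<Rightarrow> (nat \<Rightarrow> complex))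
    \<Rightarrow> (nat \<Rightarrow> complex) \<Rightarrow> (nat \<Rightarrow> complex)" where
  "w_adjoint \<omega> T g = (THE h. h \<in> H2w \<omega> \<and> (\<forall>f \<in> H2w \<omega>. w_inner \<omega> (T f) g = w_inner \<omega> f h))"

definition Vop :: "(nat \<Rightarrow> real) \<Rightarrow> complex \<Rightarrow> (nat \<Rightarrow> complex) \<Rightarrow> (nat \<Rightarrow> complex)" where
  "Vop \<omega> b = w_adjoint \<omega> (mult_bz b) \<circ> mult_bz b"

definition w_unitary :: "(nat \<Rightarrow> real) \<Rightarrow> ((nat \<Rightarrow> complex) \<Rightarrow> (nat \<Rightarrow> complex)) \<Rightarrow> bool" where
  "w_unitary \<omega> U \<longleftrightarrow> bij_betw U (H2w \<omega>) (H2w \<omega>) \<and>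
     (\<forall>f \<in> H2w \<omega>. \<forall>g \<in> H2w \<omega>. U (\<lambda>n. f n + g n) = (\<lambda>n. U f n + U g n)) \<and>
     (\<forall>c. \<forall>f \<in> H2w \<omega>. U (\<lambda>n. c * f n) = (\<lambda>n. c * U f n)) \<and>
     (\<forall>f \<in> H2w \<omega>. \<forall>g \<in> H2w \<omega>. w_inner \<omega> (U f) (U g) = w_inner \<omega> f g)"

definition unitarily_equiv :: "(nat \<Rightarrow> real) \<Rightarrow> ((nat \<Rightarrow> complex) \<Rightarrow> (nat \<Rightarrow> complex))
    \<Rightarrow> ((nat \<Rightarrow> complex) \<Rightarrow> (nat \<Rightarrow> complex)) \<Rightarrow> bool" where
  "unitarily_equiv \<omega> S T \<longleftrightarrow> (\<exists>U. w_unitary \<omega> U \<and> (\<forall>f \<in> H2w \<omega>. U (S f) = T (U f)))"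

definition w_bounded_linear :: "(nat \<Rightarrow> real) \<Rightarrow> ((nat \<Rightarrow> complex) \<Rightarrow> (nat \<Rightarrow> complex)) \<Rightarrow> bool" where
  "w_bounded_linear \<omega> S \<longleftrightarrow> S ` H2w \<omega> \<subseteq> H2w \<omega> \<and>
     (\<forall>f \<in> H2w \<omega>. \<forall>g \<in> H2w \<omega>. S (\<lambda>n. f n + g n) = (\<lambda>n. S f n + S g n)) \<and>
     (\<forall>c. \<forall>f \<in> H2w \<omega>. S (\<lambda>n. c * f n) = (\<lambda>n. c * S f n)) \<and>
     (\<exists>C. \<forall>f \<in> H2w \<omega>. w_norm \<omega> (S f) \<le> C * w_norm \<omega> f)"

definition w_spectrum :: "(nat \<Rightarrow> real) \<Rightarrow> ((nat \<Rightarrow> complex) \<Rightarrow> (nat \<Rightarrow> complex)) \<Rightarrow> complex set" where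
  "w_spectrum \<omega> T = {\<mu>. \<not> (\<exists>S. w_bounded_linear \<omega> S \<and>
      (\<forall>f \<in> H2w \<omega>. S (\<lambda>n. T f n - \<mu> * f n) = f) \<and>
      (\<forall>f \<in> H2w \<omega>. (\<lambda>n. T (S f) n - \<mu> * S f n) = f))}"

definition w_point_spectrum :: "(nat \<Rightarrow> real) \<Rightarrow> ((nat \<Rightarrow> complex) \<Rightarrow> (nat \<Rightarrow> complex)) \<Rightarrow> complex set" where
  "w_point_spectrum \<omega> T = {\<mu>. \<exists>f \<in> H2w \<omega>. f \<noteq> (\<lambda>n. 0) \<and> T f = (\<lambda>n. \<mu> * f n)}"

end

theory Submission
  imports Defs
begin

text \<open>The norm of H^2_omega depends only on the moduli of the Taylor coefficients, so for
  |u| = 1 the rotation (\<rho> f)(z) = f(cnj u * z) is unitary. Since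
  (a u - z) f(cnj u * z) = u (a - cnj u * z) f(cnj u * z), we have M_{au-z} \<rho> = u \<rho> M_{a-z};
  taking adjoints and using |u| = 1 gives V_{au} \<rho> = \<rho> V_a. Spectrum and point spectrum are
  invariant under unitary equivalence.\<close>

locale positive_weight =
  fixes \<omega> :: "nat \<Rightarrow> real"
  assumes pos: "\<And>n. \<omega> n > 0"

locale bounded_ratio_weight = positive_weight +
  fixes R :: real
  assumes ratio: "\<And>n. \<omega> (Suc n) \<le> R * \<omega> n"

subsection \<open>The space H^2_omega\<close>

lemma zero_in_H2w: "(\<lambda>n. 0) \<in> H2w \<omega>"
  by (simp add: H2w_def)

lemma H2w_scale: "f \<in> H2w \<omega> \<Longrightarrow> (\<lambda>n. c * f n) \<in> H2w \<omega>"
  unfolding H2w_def using summable_mult[of _ "(cmod c)\<^sup>2"]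
  by (simp add: norm_mult power_mult_distrib mult.assoc)

lemma w_norm_eq_sqrt_inner:
  assumes "f \<in> H2w \<omega>"
  shows "w_norm \<omega> f = sqrt (Re (w_inner \<omega> f f))"
proof -
  have "w_inner \<omega> f f = complex_of_real (\<Sum>n. (cmod (f n))\<^sup>2 * \<omega> n)"
    using assms unfolding w_inner_def H2w_def
    by (simp add: suminf_of_real complex_norm_square[symmetric] mult.commute)
  then show ?thesis
    unfolding w_norm_def by simp
qed

lemma norm_add_squared_le: "(cmod (x + y))\<^sup>2 \<le> 2 * (cmod x)\<^sup>2 + 2 * (cmod y)\<^sup>2"
proof -
  have "(cmod (x + y))\<^sup>2 \<le> (cmod x + cmod y)\<^sup>2"
    by (simp add: norm_triangle_ineq power_mono)
  also have "\<dots> \<le> 2 * (cmod x)\<^sup>2 + 2 * (cmod y)\<^sup>2"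
    using sum_squares_ge_zero[of "cmod x - cmod y" 0] by (simp add: power2_eq_square algebra_simps)
  finally show ?thesis .
qed

context positive_weight
begin

lemma H2w_add:
  assumes "f \<in> H2w \<omega>" "g \<in> H2w \<omega>"
  shows "(\<lambda>n. f n + g n) \<in> H2w \<omega>"
proof -
  have "summable (\<lambda>n. 2 * ((cmod (f n))\<^sup>2 * \<omega> n) + 2 * ((cmod (g n))\<^sup>2 * \<omega> n))"
    using assms unfolding H2w_def by (auto intro!: summable_add summable_mult)
  moreover have "norm ((cmod (f n + g n))\<^sup>2 * \<omega> n)
      \<le> 2 * ((cmod (f n))\<^sup>2 * \<omega> n) + 2 * ((cmod (g n))\<^sup>2 * \<omega> n)" for n
    using mult_right_mono[OF norm_add_squared_le less_imp_le[OF pos]] pos[of n]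
    by (simp add: abs_mult algebra_simps)
  ultimately show ?thesis
    unfolding H2w_def mem_Collect_eq by (rule summable_comparison_test')
qed

lemma H2w_diff: "f \<in> H2w \<omega> \<Longrightarrow> g \<in> H2w \<omega> \<Longrightarrow> (\<lambda>n. f n - c * g n) \<in> H2w \<omega>"
  using H2w_add[of f "\<lambda>n. - c * g n"] H2w_scale[of g \<omega> "- c"] by simp

lemma summable_w_inner:
  assumes "f \<in> H2w \<omega>" "g \<in> H2w \<omega>"
  shows "summable (\<lambda>n. f n * cnj (g n) * complex_of_real (\<omega> n))"
proof -
  have am_gm: "cmod (f n) * cmod (g n) \<le> (cmod (f n))\<^sup>2 + (cmod (g n))\<^sup>2" for n
  proof -
    have "0 \<le> (cmod (f n) - cmod (g n))\<^sup>2" "0 \<le> cmod (f n) * cmod (g n)"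
      by simp_all
    then show ?thesis
      unfolding power2_diff by linarith
  qed
  have "summable (\<lambda>n. (cmod (f n))\<^sup>2 * \<omega> n + (cmod (g n))\<^sup>2 * \<omega> n)"
    using assms unfolding H2w_def mem_Collect_eq by (rule summable_add)
  moreover have "norm (f n * cnj (g n) * complex_of_real (\<omega> n))
      \<le> (cmod (f n))\<^sup>2 * \<omega> n + (cmod (g n))\<^sup>2 * \<omega> n" for n
    using mult_right_mono[OF am_gm less_imp_le[OF pos]] pos[of n]
    by (simp add: norm_mult abs_of_pos algebra_simps)
  ultimately show ?thesis
    by (rule summable_comparison_test')
qed

lemma w_norm_nonneg: "f \<in> H2w \<omega> \<Longrightarrow> 0 \<le> w_norm \<omega> f"
  unfolding w_norm_def H2w_def by (simp add: suminf_nonneg less_imp_le[OF pos])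

lemma w_inner_right_cancel:
  assumes "\<And>f. f \<in> H2w \<omega> \<Longrightarrow> w_inner \<omega> f h = w_inner \<omega> f h'"
  shows "h = h'"
proof
  fix m
  define e where "e = (\<lambda>n::nat. if n = m then (1::complex) else 0)"
  have "(\<lambda>n. (cmod (e n))\<^sup>2 * \<omega> n) = (\<lambda>n. if n = m then \<omega> n else 0)"
    by (auto simp: e_def)
  then have "e \<in> H2w \<omega>"
    unfolding H2w_def using sums_summable[OF sums_single] by simp
  have "w_inner \<omega> e k = cnj (k m) * complex_of_real (\<omega> m)" for k
  proof -
    have "(\<lambda>n. e n * cnj (k n) * complex_of_real (\<omega> n))
        = (\<lambda>n. if n = m then cnj (k n) * complex_of_real (\<omega> n) else 0)"
      by (auto simp: e_def)
    then show ?thesis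
      unfolding w_inner_def
      using sums_unique[OF sums_single[of m "\<lambda>n. cnj (k n) * complex_of_real (\<omega> n)"]] by simp
  qed
  then have "cnj (h m) * complex_of_real (\<omega> m) = cnj (h' m) * complex_of_real (\<omega> m)"
    using assms[OF \<open>e \<in> H2w \<omega>\<close>] by simp
  then show "h m = h' m"
    using pos[of m] by simp
qed

lemma w_bounded_linear_comp:
  assumes S: "w_bounded_linear \<omega> S" and T: "w_bounded_linear \<omega> T"
  shows "w_bounded_linear \<omega> (\<lambda>f. S (T f))"
proof -
  obtain C where C: "\<And>g. g \<in> H2w \<omega> \<Longrightarrow> w_norm \<omega> (S g) \<le> C * w_norm \<omega> g"
    using S unfolding w_bounded_linear_def by blast
  obtain D where D: "\<And>f. f \<in> H2w \<omega> \<Longrightarrow> w_norm \<omega> (T f) \<le> D * w_norm \<omega> f"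
    using T unfolding w_bounded_linear_def by blast
  have T_H2w: "T f \<in> H2w \<omega>" if "f \<in> H2w \<omega>" for f
    using T that unfolding w_bounded_linear_def by blast
  have "w_norm \<omega> (S (T f)) \<le> (max C 0 * D) * w_norm \<omega> f" if "f \<in> H2w \<omega>" for f
  proof -
    have "w_norm \<omega> (S (T f)) \<le> max C 0 * w_norm \<omega> (T f)"
      using C[OF T_H2w[OF that]] w_norm_nonneg[OF T_H2w[OF that]]
      by (smt (verit) mult_right_mono)
    also have "\<dots> \<le> max C 0 * (D * w_norm \<omega> f)"
      using D[OF that] by (simp add: mult_left_mono)
    finally show ?thesis
      by (simp add: mult.assoc)
  qed
  then show ?thesis
    using S T unfolding w_bounded_linear_def by (auto simp: image_subset_iff)
qed

end

subsection \<open>Unitary equivalence\<close>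

lemma
  assumes "w_unitary \<omega> U"
  shows w_unitary_bij: "bij_betw U (H2w \<omega>) (H2w \<omega>)"
    and w_unitary_H2w: "f \<in> H2w \<omega> \<Longrightarrow> U f \<in> H2w \<omega>"
    and w_unitary_add: "f \<in> H2w \<omega> \<Longrightarrow> g \<in> H2w \<omega> \<Longrightarrow> U (\<lambda>n. f n + g n) = (\<lambda>n. U f n + U g n)"
    and w_unitary_scale: "f \<in> H2w \<omega> \<Longrightarrow> U (\<lambda>n. c * f n) = (\<lambda>n. c * U f n)"
    and w_unitary_inner: "f \<in> H2w \<omega> \<Longrightarrow> g \<in> H2w \<omega> \<Longrightarrow> w_inner \<omega> (U f) (U g) = w_inner \<omega> f g"
  using assms unfolding w_unitary_def by (auto dest: bij_betw_apply)

lemma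
  assumes "w_unitary \<omega> U"
  shows w_unitary_inv_into_H2w: "g \<in> H2w \<omega> \<Longrightarrow> inv_into (H2w \<omega>) U g \<in> H2w \<omega>"
    and w_unitary_inv_into_right: "g \<in> H2w \<omega> \<Longrightarrow> U (inv_into (H2w \<omega>) U g) = g"
    and w_unitary_inv_into_left: "f \<in> H2w \<omega> \<Longrightarrow> inv_into (H2w \<omega>) U (U f) = f"
  using bij_betw_apply[OF bij_betw_inv_into] bij_betw_inv_into_right bij_betw_inv_into_left
    w_unitary_bij[OF assms] by metis+

lemma w_unitary_zero: "w_unitary \<omega> U \<Longrightarrow> U (\<lambda>n. 0) = (\<lambda>n. 0)"
  using w_unitary_scale[OF _ zero_in_H2w, of \<omega> U 0] by simp

lemma w_unitary_diff:
  assumes "w_unitary \<omega> U" "f \<in> H2w \<omega>" "g \<in> H2w \<omega>"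
  shows "U (\<lambda>n. f n - c * g n) = (\<lambda>n. U f n - c * U g n)"
  using w_unitary_add[OF assms(1,2) H2w_scale[OF assms(3)], of "- c"]
    w_unitary_scale[OF assms(1,3), of "- c"] by simp

lemma w_unitary_norm: "w_unitary \<omega> U \<Longrightarrow> f \<in> H2w \<omega> \<Longrightarrow> w_norm \<omega> (U f) = w_norm \<omega> f"
  by (simp add: w_norm_eq_sqrt_inner w_unitary_H2w w_unitary_inner)

lemma w_unitary_imp_bounded_linear: "w_unitary \<omega> U \<Longrightarrow> w_bounded_linear \<omega> U"
  unfolding w_bounded_linear_def using w_unitary_norm
  by (auto simp: w_unitary_def bij_betw_def intro!: exI[of _ 1])

lemma unitarily_equiv_point_spectrum_subset:
  assumes "unitarily_equiv \<omega> S T"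
  shows "w_point_spectrum \<omega> S \<subseteq> w_point_spectrum \<omega> T"
proof
  fix \<mu> assume "\<mu> \<in> w_point_spectrum \<omega> S"
  then obtain f where f: "f \<in> H2w \<omega>" "f \<noteq> (\<lambda>n. 0)" "S f = (\<lambda>n. \<mu> * f n)"
    unfolding w_point_spectrum_def by blast
  obtain U where U: "w_unitary \<omega> U" and inter: "\<And>f. f \<in> H2w \<omega> \<Longrightarrow> U (S f) = T (U f)"
    using assms unfolding unitarily_equiv_def by blast
  have "U f \<noteq> U (\<lambda>n. 0)"
    using f(2) inj_on_eq_iff[OF bij_betw_imp_inj_on[OF w_unitary_bij[OF U]] f(1) zero_in_H2w] by simp
  then have "U f \<noteq> (\<lambda>n. 0)"
    by (simp add: w_unitary_zero[OF U])
  moreover have "T (U f) = (\<lambda>n. \<mu> * U f n)"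
    using inter[OF f(1)] f(3) w_unitary_scale[OF U f(1)] by simp
  ultimately show "\<mu> \<in> w_point_spectrum \<omega> T"
    unfolding w_point_spectrum_def using w_unitary_H2w[OF U f(1)] by blast
qed

context positive_weight
begin

lemma w_unitary_inv_into:
  assumes U: "w_unitary \<omega> U"
  shows "w_unitary \<omega> (inv_into (H2w \<omega>) U)"
proof -
  let ?V = "inv_into (H2w \<omega>) U"
  note V = w_unitary_inv_into_H2w[OF U] w_unitary_inv_into_right[OF U]
  show ?thesis
    unfolding w_unitary_def
  proof (intro conjI ballI allI)
    show "bij_betw ?V (H2w \<omega>) (H2w \<omega>)"
      using w_unitary_bij[OF U] by (rule bij_betw_inv_into)
  next
    fix f g assume "f \<in> H2w \<omega>" "g \<in> H2w \<omega>"
    then show "?V (\<lambda>n. f n + g n) = (\<lambda>n. ?V f n + ?V g n)"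
      using w_unitary_inv_into_left[OF U H2w_add[OF V(1) V(1)]] w_unitary_add[OF U V(1) V(1)] V(2)
      by simp
  next
    fix c f assume "f \<in> H2w \<omega>"
    then show "?V (\<lambda>n. c * f n) = (\<lambda>n. c * ?V f n)"
      using w_unitary_inv_into_left[OF U H2w_scale[OF V(1)]] w_unitary_scale[OF U V(1)] V(2) by simp
  next
    fix f g assume "f \<in> H2w \<omega>" "g \<in> H2w \<omega>"
    then show "w_inner \<omega> (?V f) (?V g) = w_inner \<omega> f g"
      using w_unitary_inner[OF U V(1) V(1)] V(2) by simp
  qed
qed

text \<open>Operators are arbitrary maps on sequences and a unitary is only controlled on H2w, so
  reversing an equivalence needs S to preserve H2w.\<close>

lemma unitarily_equiv_image:
  assumes "unitarily_equiv \<omega> S T" "S ` H2w \<omega> \<subseteq> H2w \<omega>"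
  shows "T ` H2w \<omega> \<subseteq> H2w \<omega>"
proof
  fix h assume "h \<in> T ` H2w \<omega>"
  then obtain g where g: "g \<in> H2w \<omega>" "h = T g"
    by blast
  obtain U where U: "w_unitary \<omega> U" and inter: "\<And>f. f \<in> H2w \<omega> \<Longrightarrow> U (S f) = T (U f)"
    using assms(1) unfolding unitarily_equiv_def by blast
  define f where "f = inv_into (H2w \<omega>) U g"
  have "f \<in> H2w \<omega>" "h = U (S f)"
    using w_unitary_inv_into_H2w[OF U g(1)] inter w_unitary_inv_into_right[OF U g(1)] g(2)
    unfolding f_def by auto
  then show "h \<in> H2w \<omega>"
    using assms(2) w_unitary_H2w[OF U] by blast
qed

lemma unitarily_equiv_sym:
  assumes "unitarily_equiv \<omega> S T" "S ` H2w \<omega> \<subseteq> H2w \<omega>"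
  shows "unitarily_equiv \<omega> T S"
proof -
  obtain U where U: "w_unitary \<omega> U" and inter: "\<And>f. f \<in> H2w \<omega> \<Longrightarrow> U (S f) = T (U f)"
    using assms(1) unfolding unitarily_equiv_def by blast
  let ?V = "inv_into (H2w \<omega>) U"
  have "?V (T g) = S (?V g)" if "g \<in> H2w \<omega>" for g
  proof -
    have "S (?V g) \<in> H2w \<omega>" "T g = U (S (?V g))"
      using assms(2) w_unitary_inv_into_H2w[OF U that] inter w_unitary_inv_into_right[OF U that]
      by auto
    then show ?thesis
      by (simp add: w_unitary_inv_into_left[OF U])
  qed
  then show ?thesis
    unfolding unitarily_equiv_def using w_unitary_inv_into[OF U] by blast
qed

lemma unitarily_equiv_spectrum_subset:
  assumes equiv: "unitarily_equiv \<omega> S T" and S: "S ` H2w \<omega> \<subseteq> H2w \<omega>"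
  shows "w_spectrum \<omega> T \<subseteq> w_spectrum \<omega> S"
proof
  fix \<mu> assume \<mu>: "\<mu> \<in> w_spectrum \<omega> T"
  show "\<mu> \<in> w_spectrum \<omega> S"
  proof (rule ccontr)
    assume "\<mu> \<notin> w_spectrum \<omega> S"
    then obtain R where R: "w_bounded_linear \<omega> R"
      and left: "\<And>f. f \<in> H2w \<omega> \<Longrightarrow> R (\<lambda>n. S f n - \<mu> * f n) = f"
      and right: "\<And>f. f \<in> H2w \<omega> \<Longrightarrow> (\<lambda>n. S (R f) n - \<mu> * R f n) = f"
      unfolding w_spectrum_def by auto
    obtain U where U: "w_unitary \<omega> U" and inter: "\<And>f. f \<in> H2w \<omega> \<Longrightarrow> U (S f) = T (U f)"
      using equiv unfolding unitarily_equiv_def by blast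
    define V where "V = inv_into (H2w \<omega>) U"
    note V = w_unitary_inv_into_H2w[OF U, folded V_def] w_unitary_inv_into_right[OF U, folded V_def]
      w_unitary_inv_into_left[OF U, folded V_def]
    have R_H2w: "R f \<in> H2w \<omega>" if "f \<in> H2w \<omega>" for f
      using R that unfolding w_bounded_linear_def by blast
    have resolvent: "U (\<lambda>n. S f n - \<mu> * f n) = (\<lambda>n. T (U f) n - \<mu> * U f n)" if "f \<in> H2w \<omega>" for f
    proof -
      have "S f \<in> H2w \<omega>"
        using S that by blast
      then show ?thesis
        using w_unitary_diff[OF U _ that] inter[OF that] by simp
    qed
    have "w_bounded_linear \<omega> (\<lambda>g. U (R (V g)))"
      unfolding V_def
      by (intro w_bounded_linear_comp[OF w_unitary_imp_bounded_linear[OF U]]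
          w_bounded_linear_comp[OF R] w_unitary_imp_bounded_linear w_unitary_inv_into U)
    moreover have "U (R (V (\<lambda>n. T g n - \<mu> * g n))) = g" if "g \<in> H2w \<omega>" for g
    proof -
      have "S (V g) \<in> H2w \<omega>"
        using S V(1)[OF that] by blast
      moreover have "(\<lambda>n. T g n - \<mu> * g n) = U (\<lambda>n. S (V g) n - \<mu> * V g n)"
        using resolvent[OF V(1)[OF that]] V(2)[OF that] by simp
      ultimately have "V (\<lambda>n. T g n - \<mu> * g n) = (\<lambda>n. S (V g) n - \<mu> * V g n)"
        using V(3)[OF H2w_diff[OF _ V(1)[OF that]]] by simp
      then show ?thesis
        using left V(1,2)[OF that] by simp
    qed
    moreover have "(\<lambda>n. T (U (R (V g))) n - \<mu> * U (R (V g)) n) = g" if "g \<in> H2w \<omega>" for g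
      using resolvent[OF R_H2w[OF V(1)[OF that]]] right[OF V(1)[OF that]] V(2)[OF that] by simp
    ultimately have "\<mu> \<notin> w_spectrum \<omega> T"
      unfolding w_spectrum_def by blast
    with \<mu> show False
      by blast
  qed
qed

lemma unitarily_equiv_spectra_eq:
  assumes "unitarily_equiv \<omega> S T" "S ` H2w \<omega> \<subseteq> H2w \<omega>"
  shows "w_spectrum \<omega> S = w_spectrum \<omega> T" "w_point_spectrum \<omega> S = w_point_spectrum \<omega> T"
proof -
  have reverse: "unitarily_equiv \<omega> T S" "T ` H2w \<omega> \<subseteq> H2w \<omega>"
    by (fact unitarily_equiv_sym[OF assms], fact unitarily_equiv_image[OF assms])
  show "w_spectrum \<omega> S = w_spectrum \<omega> T"
    using unitarily_equiv_spectrum_subset[OF reverse] unitarily_equiv_spectrum_subset[OF assms]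
    by (rule subset_antisym)
  show "w_point_spectrum \<omega> S = w_point_spectrum \<omega> T"
    using unitarily_equiv_point_spectrum_subset[OF assms(1)] unitarily_equiv_point_spectrum_subset[OF reverse(1)]
    by (rule subset_antisym)
qed

end

subsection \<open>Rotations\<close>

definition rotation :: "complex \<Rightarrow> (nat \<Rightarrow> complex) \<Rightarrow> nat \<Rightarrow> complex" where
  "rotation c f = (\<lambda>n. c ^ n * f n)"

lemma rotation_rotation: "c * d = 1 \<Longrightarrow> rotation c (rotation d f) = f"
  unfolding rotation_def by (simp add: mult.assoc[symmetric] power_mult_distrib[symmetric])

lemma norm_rotation: "cmod c = 1 \<Longrightarrow> cmod (rotation c f n) = cmod (f n)"
  unfolding rotation_def by (simp add: norm_mult norm_power)

lemma rotation_H2w: "cmod c = 1 \<Longrightarrow> f \<in> H2w \<omega> \<Longrightarrow> rotation c f \<in> H2w \<omega>"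
  unfolding H2w_def by (simp add: norm_rotation)

lemma w_inner_rotation:
  assumes "cmod c = 1"
  shows "w_inner \<omega> (rotation c f) (rotation c g) = w_inner \<omega> f g"
proof -
  have "c ^ n * cnj (c ^ n) = 1" for n
    using assms complex_norm_square[of "c ^ n"] by (simp add: norm_power)
  then have termwise: "c ^ n * f n * cnj (c ^ n * g n) = f n * cnj (g n)" for n
    by (metis (no_types, lifting) complex_cnj_mult mult.assoc mult.left_commute mult_1)
  show ?thesis
    unfolding w_inner_def rotation_def by (simp only: termwise)
qed

lemma w_unitary_rotation:
  assumes c: "cmod c = 1"
  shows "w_unitary \<omega> (rotation c)"
  unfolding w_unitary_def
proof (intro conjI ballI allI)
  have c': "cmod (cnj c) = 1" "c * cnj c = 1" "cnj c * c = 1"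
    using c complex_norm_square[of c] by (auto simp: mult.commute)
  show "bij_betw (rotation c) (H2w \<omega>) (H2w \<omega>)"
    by (rule bij_betw_byWitness[where f'="rotation (cnj c)"])
       (auto simp: rotation_rotation c' rotation_H2w c)
qed (use w_inner_rotation[OF c] in \<open>auto simp: rotation_def algebra_simps\<close>)

subsection \<open>The operators V_b\<close>

definition shift :: "(nat \<Rightarrow> complex) \<Rightarrow> nat \<Rightarrow> complex" where
  "shift f = (\<lambda>n. if n = 0 then 0 else f (n - 1))"

definition mult_bz_adj :: "(nat \<Rightarrow> real) \<Rightarrow> complex \<Rightarrow> (nat \<Rightarrow> complex) \<Rightarrow> nat \<Rightarrow> complex" where
  "mult_bz_adj \<omega> b g = (\<lambda>m. cnj b * g m - complex_of_real (\<omega> (Suc m) / \<omega> m) * g (Suc m))"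

lemma mult_bz_eq_shift: "mult_bz b f = (\<lambda>n. b * f n - shift f n)"
  by (auto simp: mult_bz_def shift_def)

lemma mult_bz_rotation:
  assumes "u * v = 1"
  shows "mult_bz (a * u) (rotation v f) = (\<lambda>n. u * rotation v (mult_bz a f) n)"
proof
  fix n
  have "u * v ^ Suc m = v ^ m" for m
    using assms by (simp add: mult.assoc[symmetric])
  then show "mult_bz (a * u) (rotation v f) n = u * rotation v (mult_bz a f) n"
    by (cases n) (simp_all add: mult_bz_def rotation_def algebra_simps)
qed

lemma mult_bz_adj_rotation:
  assumes "cmod u = 1"
  shows "mult_bz_adj \<omega> (a * u) (\<lambda>n. u * rotation (cnj u) g n) = rotation (cnj u) (mult_bz_adj \<omega> a g)"
proof
  fix m
  have uu: "cnj u * u = 1" "u * cnj u = 1"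
    using assms complex_norm_square[of u] by (auto simp: mult.commute)
  have "cnj (a * u) * (u * (cnj u ^ m * g m)) = cnj a * (cnj u * u) * (cnj u ^ m * g m)"
    by (simp add: mult_ac)
  then have first: "cnj (a * u) * (u * (cnj u ^ m * g m)) = cnj u ^ m * (cnj a * g m)"
    unfolding uu(1) by (simp add: mult_ac)
  have second: "u * (cnj u ^ Suc m * g (Suc m)) = cnj u ^ m * g (Suc m)"
    unfolding mult.assoc[symmetric] power_Suc mult.left_commute[of u] uu(2) by simp
  show "mult_bz_adj \<omega> (a * u) (\<lambda>n. u * rotation (cnj u) g n) m
      = rotation (cnj u) (mult_bz_adj \<omega> a g) m"
    unfolding mult_bz_adj_def rotation_def by (simp only: first second) (simp add: algebra_simps)
qed

context bounded_ratio_weight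
begin

lemma H2w_shift:
  assumes "f \<in> H2w \<omega>"
  shows "shift f \<in> H2w \<omega>"
proof -
  have "summable (\<lambda>n. R * ((cmod (f n))\<^sup>2 * \<omega> n))"
    using assms unfolding H2w_def by (simp add: summable_mult)
  moreover have "norm ((cmod (shift f (Suc n)))\<^sup>2 * \<omega> (Suc n)) \<le> R * ((cmod (f n))\<^sup>2 * \<omega> n)" for n
    using mult_left_mono[OF ratio[of n], of "(cmod (f n))\<^sup>2"] less_imp_le[OF pos[of "Suc n"]]
    by (simp add: shift_def abs_mult algebra_simps)
  ultimately have "summable (\<lambda>n. (cmod (shift f (Suc n)))\<^sup>2 * \<omega> (Suc n))"
    by (rule summable_comparison_test')
  then show ?thesis
    unfolding H2w_def using summable_Suc_iff[of "\<lambda>n. (cmod (shift f n))\<^sup>2 * \<omega> n"] by simp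
qed

lemma H2w_weighted_backshift:
  assumes "g \<in> H2w \<omega>"
  shows "(\<lambda>m. complex_of_real (\<omega> (Suc m) / \<omega> m) * g (Suc m)) \<in> H2w \<omega>"
proof -
  have "summable (\<lambda>n. (cmod (g (Suc n)))\<^sup>2 * \<omega> (Suc n))"
    using assms summable_Suc_iff[of "\<lambda>n. (cmod (g n))\<^sup>2 * \<omega> n"] unfolding H2w_def by simp
  then have "summable (\<lambda>n. R * ((cmod (g (Suc n)))\<^sup>2 * \<omega> (Suc n)))"
    by (rule summable_mult)
  moreover have "norm ((cmod (complex_of_real (\<omega> (Suc n) / \<omega> n) * g (Suc n)))\<^sup>2 * \<omega> n)
      \<le> R * ((cmod (g (Suc n)))\<^sup>2 * \<omega> (Suc n))" for n
  proof -
    have ratio_le: "\<omega> (Suc n) / \<omega> n \<le> R"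
      using ratio[of n] pos[of n] by (simp add: divide_le_eq)
    have norm_eq: "cmod (complex_of_real (\<omega> (Suc n) / \<omega> n) * g (Suc n)) = \<omega> (Suc n) / \<omega> n * cmod (g (Suc n))"
      using pos[of n] pos[of "Suc n"] by (simp only: norm_mult norm_of_real) simp
    have "norm ((cmod (complex_of_real (\<omega> (Suc n) / \<omega> n) * g (Suc n)))\<^sup>2 * \<omega> n)
        = (\<omega> (Suc n) / \<omega> n) * ((cmod (g (Suc n)))\<^sup>2 * \<omega> (Suc n))"
      unfolding norm_eq using pos[of n] pos[of "Suc n"]
      by (simp add: abs_mult power2_eq_square field_simps)
    also have "\<dots> \<le> R * ((cmod (g (Suc n)))\<^sup>2 * \<omega> (Suc n))"
      using mult_right_mono[OF ratio_le, of "(cmod (g (Suc n)))\<^sup>2 * \<omega> (Suc n)"] less_imp_le[OF pos[of "Suc n"]]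
      by simp
    finally show ?thesis .
  qed
  ultimately show ?thesis
    unfolding H2w_def mem_Collect_eq by (rule summable_comparison_test')
qed

lemma H2w_mult_bz: "f \<in> H2w \<omega> \<Longrightarrow> mult_bz b f \<in> H2w \<omega>"
  using H2w_diff[where c = 1, OF H2w_scale H2w_shift] by (simp add: mult_bz_eq_shift)

lemma H2w_mult_bz_adj: "g \<in> H2w \<omega> \<Longrightarrow> mult_bz_adj \<omega> b g \<in> H2w \<omega>"
  using H2w_diff[where c = 1, OF H2w_scale H2w_weighted_backshift] by (simp add: mult_bz_adj_def)

lemma w_inner_mult_bz:
  assumes f: "f \<in> H2w \<omega>" and g: "g \<in> H2w \<omega>"
  shows "w_inner \<omega> (mult_bz b f) g = w_inner \<omega> f (mult_bz_adj \<omega> b g)"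
proof -
  define A where "A n = f n * cnj (g n) * complex_of_real (\<omega> n)" for n
  define B where "B n = shift f n * cnj (g n) * complex_of_real (\<omega> n)" for n
  have A: "summable A"
    unfolding A_def using f g by (rule summable_w_inner)
  have B: "summable B"
    unfolding B_def using H2w_shift[OF f] g by (rule summable_w_inner)
  then have B': "summable (\<lambda>n. B (Suc n))"
    by (simp add: summable_Suc_iff)
  have "w_inner \<omega> (mult_bz b f) g = (\<Sum>n. b * A n - B n)"
    unfolding w_inner_def mult_bz_eq_shift A_def B_def by (simp add: algebra_simps)
  also have "\<dots> = b * suminf A - suminf B"
    using suminf_diff[OF summable_mult[OF A] B] suminf_mult[OF A] by simp
  also have "suminf B = (\<Sum>n. B (Suc n))"
    using suminf_split_head[OF B] by (simp add: B_def shift_def)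
  also have "b * suminf A - (\<Sum>n. B (Suc n)) = (\<Sum>n. b * A n - B (Suc n))"
    using suminf_diff[OF summable_mult[OF A] B'] suminf_mult[OF A] by simp
  also have "\<dots> = w_inner \<omega> f (mult_bz_adj \<omega> b g)"
    unfolding w_inner_def
  proof (rule suminf_cong)
    fix n
    show "b * A n - B (Suc n) = f n * cnj (mult_bz_adj \<omega> b g n) * complex_of_real (\<omega> n)"
      using pos[of n] unfolding A_def B_def mult_bz_adj_def shift_def by (simp add: field_simps)
  qed
  finally show ?thesis .
qed

lemma w_adjoint_mult_bz:
  assumes g: "g \<in> H2w \<omega>"
  shows "w_adjoint \<omega> (mult_bz b) g = mult_bz_adj \<omega> b g"
  unfolding w_adjoint_def
proof (rule the1_equality)
  show adj: "mult_bz_adj \<omega> b g \<in> H2w \<omega> \<and>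
      (\<forall>f \<in> H2w \<omega>. w_inner \<omega> (mult_bz b f) g = w_inner \<omega> f (mult_bz_adj \<omega> b g))"
    using H2w_mult_bz_adj[OF g] w_inner_mult_bz[OF _ g] by blast
  show "\<exists>!h. h \<in> H2w \<omega> \<and> (\<forall>f \<in> H2w \<omega>. w_inner \<omega> (mult_bz b f) g = w_inner \<omega> f h)"
  proof (rule ex1I, fact adj)
    fix h assume "h \<in> H2w \<omega> \<and> (\<forall>f \<in> H2w \<omega>. w_inner \<omega> (mult_bz b f) g = w_inner \<omega> f h)"
    then show "h = mult_bz_adj \<omega> b g"
      using adj by (intro w_inner_right_cancel) auto
  qed
qed

lemma Vop_eq: "f \<in> H2w \<omega> \<Longrightarrow> Vop \<omega> b f = mult_bz_adj \<omega> b (mult_bz b f)"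
  by (simp add: Vop_def w_adjoint_mult_bz H2w_mult_bz)

lemma Vop_H2w: "Vop \<omega> b ` H2w \<omega> \<subseteq> H2w \<omega>"
  by (auto simp: Vop_eq H2w_mult_bz H2w_mult_bz_adj)

lemma Vop_rotation:
  assumes u: "cmod u = 1" and f: "f \<in> H2w \<omega>"
  shows "Vop \<omega> (a * u) (rotation (cnj u) f) = rotation (cnj u) (Vop \<omega> a f)"
proof -
  have "u * cnj u = 1"
    using u complex_norm_square[of u] by simp
  then have "mult_bz (a * u) (rotation (cnj u) f) = (\<lambda>n. u * rotation (cnj u) (mult_bz a f) n)"
    by (rule mult_bz_rotation)
  then show ?thesis
    using u f by (simp add: Vop_eq rotation_H2w H2w_mult_bz mult_bz_adj_rotation)
qed

lemma unitarily_equiv_Vop_rotation: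
  assumes "cmod u = 1"
  shows "unitarily_equiv \<omega> (Vop \<omega> a) (Vop \<omega> (a * u))"
  unfolding unitarily_equiv_def
proof (intro exI conjI ballI)
  show "w_unitary \<omega> (rotation (cnj u))"
    using assms by (intro w_unitary_rotation) simp
  show "rotation (cnj u) (Vop \<omega> a f) = Vop \<omega> (a * u) (rotation (cnj u) f)" if "f \<in> H2w \<omega>" for f
    using Vop_rotation[OF assms that] by simp
qed

end

lemma valid_weight_imp_bounded_ratio_weight:
  assumes "valid_weight \<omega>"
  obtains R where "bounded_ratio_weight \<omega> R"
proof -
  have pos: "\<And>n. \<omega> n > 0"
    using assms unfolding valid_weight_def by blast
  have "convergent (\<lambda>n. \<omega> (Suc n) / \<omega> n)"
    using assms unfolding valid_weight_def convergent_def by blast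
  then obtain R where bound: "\<And>n. norm (\<omega> (Suc n) / \<omega> n) \<le> R"
    using convergent_imp_Bseq BseqE by blast
  have "\<omega> (Suc n) \<le> R * \<omega> n" for n
  proof -
    have "\<omega> (Suc n) / \<omega> n \<le> R"
      using bound[of n] pos[of n] pos[of "Suc n"] by simp
    then show ?thesis
      using pos[of n] by (simp add: divide_le_eq)
  qed
  with pos have "bounded_ratio_weight \<omega> R"
    by unfold_locales
  then show ?thesis
    by (rule that)
qed

theorem lemma4p1:
  fixes \<omega> :: "nat \<Rightarrow> real" and a :: complex and \<theta> :: real
  assumes "valid_weight \<omega>" and "a \<noteq> 0"
  shows "unitarily_equiv \<omega> (Vop \<omega> a) (Vop \<omega> (a * exp (\<i> * complex_of_real \<theta>)))
    \<and> w_spectrum \<omega> (Vop \<omega> a) = w_spectrum \<omega> (Vop \<omega> (a * exp (\<i> * complex_of_real \<theta>)))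
    \<and> w_point_spectrum \<omega> (Vop \<omega> a) = w_point_spectrum \<omega> (Vop \<omega> (a * exp (\<i> * complex_of_real \<theta>)))"
proof -
  obtain R where "bounded_ratio_weight \<omega> R"
    using valid_weight_imp_bounded_ratio_weight[OF assms(1)] by blast
  then interpret bounded_ratio_weight \<omega> R .
  have "unitarily_equiv \<omega> (Vop \<omega> a) (Vop \<omega> (a * exp (\<i> * complex_of_real \<theta>)))"
    using norm_exp_i_times by (rule unitarily_equiv_Vop_rotation)
  then show ?thesis
    using unitarily_equiv_spectra_eq[OF _ Vop_H2w] by blast
qed

end
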